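(* Let $r>0$ and $\overline T>0$. For $\mathbf h,\mathbf g\in\mathbb R^3$ set $\mathbf v=\mathbf h+\frac{r}{1+r}\mathbf g$ and $\mathbf w=\sqrt r\,\mathbf h-\frac{\sqrt r}{1+r}\mathbf g$. Then for all multi-indices $\lambda=(l_1,l_2,l_3),\kappa=(k_1,k_2,k_3)\in\mathbb N^3$, $$H^{\mathbf 0,\overline T}_\lambda(\mathbf v)H^{\mathbf 0,\overline T}_\kappa(\mathbf w)=\sum_{\kappa'+\lambda'=\kappa+\lambda}c^{l_1k_1}_{l'_1k'_1}(r)\,c^{l_2k_2}_{l'_2k'_2}(r)\,c^{l_3k_3}_{l'_3k'_3}(r)\,H^{\mathbf 0,\overline T}_{\lambda'}\big(\sqrt{1+r}\,\mathbf h\big)H^{\mathbf 0,\overline T}_{\kappa'}\Big(\sqrt{\tfrac{r}{1+r}}\,\mathbf g\Big),$$ where the sum runs over $\kappa'=(k'_1,k'_2,k'_3),\lambda'=(l'_1,l'_2,l'_3)\in\mathbb N^3$ with $\kappa'+\lambda'=\kappa+\lambda$, and $$c^{l_dk_d}_{l'_dk'_d}(r)=(1+r)^{-\frac{l'_d+k'_d}{2}}\sum_{s\in\mathbb Z}C_{l_d}^{s}C_{k_d}^{l'_d-s}(-1)^{k_d-l'_d+s}r^{\frac{l_d+l'_d}{2}-s}.$$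
   Context: For $\mathbf u\in\mathbb R^3$, $T>0$, $\mathcal M_{\mathbf u,T}(\mathbf v)=(2\pi T)^{-3/2}\exp\!\big(-|\mathbf v-\mathbf u|^2/(2T)\big)$, and for $\alpha\in\mathbb N^3$ with $|\alpha|=\alpha_1+\alpha_2+\alpha_3$, the Hermite polynomial is $H^{\mathbf u,T}_\alpha(\mathbf v)=\frac{(-1)^{|\alpha|}T^{|\alpha|/2}}{\mathcal M_{\mathbf u,T}(\mathbf v)}\frac{\partial^{|\alpha|}}{\partial v_1^{\alpha_1}\partial v_2^{\alpha_2}\partial v_3^{\alpha_3}}\mathcal M_{\mathbf u,T}(\mathbf v)$. $C_n^k$ is the binomial coefficient, taken to be $0$ when $k<0$ or $k>n$. *)

theory Defs
  imports "HOL-Analysis.Analysis"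
begin

definition maxwellian :: "real^3 \<Rightarrow> real \<Rightarrow> real^3 \<Rightarrow> real" where
  "maxwellian u T v = (2 * pi * T) powr (-3/2) * exp (- ((norm (v - u))^2) / (2 * T))"

definition partial_d :: "3 \<Rightarrow> (real^3 \<Rightarrow> real) \<Rightarrow> real^3 \<Rightarrow> real" where
  "partial_d i f v = deriv (\<lambda>t. f (\<chi> j. if j = i then t else v $ j)) (v $ i)"

definition dpow :: "(3 \<Rightarrow> nat) \<Rightarrow> (real^3 \<Rightarrow> real) \<Rightarrow> real^3 \<Rightarrow> real" where
  "dpow \<alpha> f = (partial_d 1 ^^ \<alpha> 1) ((partial_d 2 ^^ \<alpha> 2) ((partial_d 3 ^^ \<alpha> 3) f))"

definition mabs :: "(3 \<Rightarrow> nat) \<Rightarrow> nat" where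
  "mabs \<alpha> = \<alpha> 1 + \<alpha> 2 + \<alpha> 3"

definition hermite :: "real^3 \<Rightarrow> real \<Rightarrow> (3 \<Rightarrow> nat) \<Rightarrow> real^3 \<Rightarrow> real" where
  "hermite u T \<alpha> v = (-1) ^ mabs \<alpha> * T powr (real (mabs \<alpha>) / 2)
      / maxwellian u T v * dpow \<alpha> (maxwellian u T) v"

definition binom_int :: "nat \<Rightarrow> int \<Rightarrow> real" where
  "binom_int n k = (if k < 0 \<or> k > int n then 0 else real (n choose nat k))"

text \<open>Coefficient c^{l k}_{l' k'}(r). Only s in 0..l contribute (C_l^s = 0 otherwise).\<close>
definition coef_c :: "nat \<Rightarrow> nat \<Rightarrow> nat \<Rightarrow> nat \<Rightarrow> real \<Rightarrow> real" where
  "coef_c l k l' k' r = (1 + r) powr (- (real l' + real k') / 2) *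
     (\<Sum>s\<in>{0..int l}. binom_int l s * binom_int k (int l' - s)
        * (-1) powi (int k - int l' + s) * r powr ((real l + real l') / 2 - real_of_int s))"

end

theory Submission
  imports Defs "HOL-Computational_Algebra.Polynomial"
begin

(* The Hermite functions centred at 0 factor over the coordinates, hermite 0 T \<alpha> v being the
   product of the probabilists' Hermite polynomials He (\<alpha> d) (v$d / sqrt T), so it suffices to
   prove a one-dimensional identity and multiply out.  In one dimension put
   X = sqrt (1 + r) x / sqrt T, Y = sqrt (r / (1 + r)) y / sqrt T, a = 1 / sqrt (1 + r) and
   b = sqrt (r / (1 + r)); then a^2 + b^2 = 1 and the two arguments are a X + b Y and b X - a Y.
   Map a homogeneous polynomial of degree n in s, t to a function of X, Y by sending
   s^i t^(n-i) to He i X * He (n - i) Y.  By the three-term recurrence, multiplication by X and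
   by Y corresponds to s + d/ds and t + d/dt, and induction on l and k shows that
   He l (a X + b Y) * He k (b X - a Y) is the image of (a s + b t)^l (b s - a t)^k.  Expanding
   this product binomially gives the coefficients coef_c. *)

fun He :: "nat \<Rightarrow> real \<Rightarrow> real" where
  "He 0 x = 1"
| "He (Suc n) x = x * He n x - real n * He (n - 1) x"

lemma DERIV_He: "(He n has_real_derivative real n * He (n - 1) x) (at x)"
proof (induction n x rule: He.induct)
  case (1 x)
  then show ?case by simp
next
  case (2 n x)
  have "((\<lambda>x. x * He n x - real n * He (n - 1) x) has_real_derivative
         He n x + x * (real n * He (n - 1) x) - real n * (real (n - 1) * He (n - 1 - 1) x)) (at x)"
    by (rule derivative_eq_intros "2.IH" refl)+ simp
  moreover have "He n x + x * (real n * He (n - 1) x) - real n * (real (n - 1) * He (n - 1 - 1) x)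
                 = real (Suc n) * He n x"
    by (cases n) (auto simp: algebra_simps)
  moreover have "He (Suc n) = (\<lambda>x. x * He n x - real n * He (n - 1) x)"
    by (rule ext) simp
  ultimately show ?case by simp
qed

definition gaussian_deriv :: "real \<Rightarrow> nat \<Rightarrow> real \<Rightarrow> real" where
  "gaussian_deriv T n t = (- 1 / sqrt T) ^ n * He n (t / sqrt T) * exp (- (t^2) / (2 * T))"

lemma DERIV_gaussian_deriv:
  assumes "T > 0"
  shows "(gaussian_deriv T n has_real_derivative gaussian_deriv T (Suc n) t) (at t)"
proof -
  have "(gaussian_deriv T n has_real_derivative
          (- 1 / sqrt T) ^ n * (real n * He (n - 1) (t / sqrt T) / sqrt T
            - t / T * He n (t / sqrt T)) * exp (- (t^2) / (2 * T))) (at t)"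
    unfolding gaussian_deriv_def using assms
    by (auto intro!: derivative_eq_intros DERIV_He[THEN DERIV_chain2]
             simp: field_simps power2_eq_square)
  moreover have "(- 1 / sqrt T) ^ n * (real n * He (n - 1) (t / sqrt T) / sqrt T
            - t / T * He n (t / sqrt T)) = (- 1 / sqrt T) ^ Suc n * He (Suc n) (t / sqrt T)"
    using assms by (simp add: field_simps real_sqrt_mult[symmetric])
  ultimately show ?thesis
    by (simp add: gaussian_deriv_def)
qed

lemma partial_d_prod:
  fixes F :: "3 \<Rightarrow> real \<Rightarrow> real"
  assumes "\<And>t. (F i has_real_derivative F' t) (at t)"
  shows "partial_d i (\<lambda>v. c * (\<Prod>d\<in>UNIV. F d (v$d))) v
         = c * (\<Prod>d\<in>UNIV. (F(i := F')) d (v$d))"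
proof -
  let ?others = "\<Prod>d\<in>UNIV-{i}. F d (v$d)"
  have "(\<Prod>d\<in>UNIV. F d ((\<chi> j. if j = i then t else v$j) $ d)) = F i t * ?others" for t
    by (subst prod.remove[of UNIV i]) (auto intro!: prod.cong)
  then have "partial_d i (\<lambda>v. c * (\<Prod>d\<in>UNIV. F d (v$d))) v
             = deriv (\<lambda>t. c * ?others * F i t) (v$i)"
    by (simp add: partial_d_def mult_ac)
  also have "\<dots> = c * ?others * F' (v$i)"
    by (rule DERIV_imp_deriv) (intro DERIV_cmult assms)
  also have "\<dots> = c * (\<Prod>d\<in>UNIV. (F(i := F')) d (v$d))"
    by (subst prod.remove[of UNIV i]) (auto intro!: prod.cong)
  finally show ?thesis .
qed

lemma partial_d_pow_gaussian:
  assumes "T > 0"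
  shows "(partial_d i ^^ n) (\<lambda>v. c * (\<Prod>d\<in>UNIV. gaussian_deriv T (m d) (v$d)))
         = (\<lambda>v. c * (\<Prod>d\<in>UNIV. gaussian_deriv T ((m(i := m i + n)) d) (v$d)))"
proof (induction n)
  case 0
  then show ?case by simp
next
  case (Suc n)
  have "partial_d i (\<lambda>v. c * (\<Prod>d\<in>UNIV. gaussian_deriv T ((m(i := m i + n)) d) (v$d))) v
        = c * (\<Prod>d\<in>UNIV. gaussian_deriv T ((m(i := m i + Suc n)) d) (v$d))" for v
    by (subst partial_d_prod[where F' = "gaussian_deriv T (m i + Suc n)"])
       (auto intro!: prod.cong DERIV_gaussian_deriv assms)
  then show ?case
    using Suc by auto
qed

lemma dpow_gaussian_prod:
  assumes "T > 0"
  shows "dpow \<alpha> (\<lambda>v. c * (\<Prod>d\<in>UNIV. gaussian_deriv T (m d) (v$d)))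
         = (\<lambda>v. c * (\<Prod>d\<in>UNIV. gaussian_deriv T (m d + \<alpha> d) (v$d)))"
proof -
  \<comment> \<open>the three function updates in \<open>dpow\<close>, as simp normalises them\<close>
  have "(if d = 1 then m 1 + \<alpha> 1 else if d = 2 then m 2 + \<alpha> 2 else if d = 3 then m 3 + \<alpha> 3 else m d)
        = m d + \<alpha> d" for d :: 3
    using exhaust_3[of d] by auto
  then show ?thesis
    by (simp add: dpow_def partial_d_pow_gaussian[OF assms])
qed

lemma maxwellian_0_eq_prod:
  assumes "T > 0"
  shows "maxwellian 0 T = (\<lambda>v. (2*pi*T) powr (-3/2) * (\<Prod>d\<in>UNIV. gaussian_deriv T 0 (v$d)))"
proof
  fix v :: "real^3"
  have "(norm v)^2 = (\<Sum>d\<in>UNIV. (v$d)^2)"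
    by (simp only: power2_norm_eq_inner) (simp add: inner_vec_def power2_eq_square)
  then have "exp (- ((norm v)^2) / (2 * T)) = (\<Prod>d\<in>UNIV. exp (- ((v$d)^2) / (2 * T)))"
    by (simp add: exp_sum[symmetric] sum_divide_distrib sum_negf)
  then show "maxwellian 0 T v = (2*pi*T) powr (-3/2) * (\<Prod>d\<in>UNIV. gaussian_deriv T 0 (v$d))"
    by (simp add: maxwellian_def gaussian_deriv_def)
qed

lemma hermite_0_eq_prod_He:
  assumes "T > 0"
  shows "hermite 0 T \<alpha> v = (\<Prod>d\<in>UNIV. He (\<alpha> d) (v$d / sqrt T))"
proof -
  let ?E = "\<Prod>d\<in>UNIV. exp (- ((v$d)^2) / (2 * T))"
  have prod_pow: "(\<Prod>d\<in>UNIV. x ^ \<alpha> d) = x ^ mabs \<alpha>" for x :: real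
    by (simp add: power_sum[symmetric] sum_3 mabs_def)
  have "dpow \<alpha> (maxwellian 0 T) v = (2*pi*T) powr (-3/2) * (\<Prod>d\<in>UNIV. gaussian_deriv T (\<alpha> d) (v$d))"
    using dpow_gaussian_prod[OF assms, of \<alpha> _ "\<lambda>_. 0"] by (simp add: maxwellian_0_eq_prod[OF assms])
  also have "\<dots> = (2*pi*T) powr (-3/2) * (- 1 / sqrt T) ^ mabs \<alpha>
                    * (\<Prod>d\<in>UNIV. He (\<alpha> d) (v$d / sqrt T)) * ?E"
    by (simp add: gaussian_deriv_def prod.distrib prod_pow)
  finally have dpow: "dpow \<alpha> (maxwellian 0 T) v = \<dots>" .
  have "T powr (real (mabs \<alpha>) / 2) = sqrt T ^ mabs \<alpha>"
    using assms by (simp add: powr_half_sqrt[symmetric] powr_realpow[symmetric] powr_powr)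
  then have "(-1) ^ mabs \<alpha> * T powr (real (mabs \<alpha>) / 2) * (- 1 / sqrt T) ^ mabs \<alpha> = 1"
    using assms by (simp add: power_mult_distrib[symmetric])
  moreover have "?E > 0"
    by (rule prod_pos) auto
  moreover have "maxwellian 0 T v = (2*pi*T) powr (-3/2) * ?E"
    by (simp add: maxwellian_0_eq_prod[OF assms] gaussian_deriv_def)
  ultimately show ?thesis
    unfolding hermite_def dpow using assms by (simp add: field_simps)
qed

(* A polynomial p with degree p \<le> n stands for the homogeneous polynomial
   \<Sum>i\<le>n. coeff p i * s^i * t^(n-i);
   He_umbral is its image under s^i t^(n-i) \<mapsto> He i X * He (n-i) Y. *)
definition He_umbral :: "real \<Rightarrow> real \<Rightarrow> nat \<Rightarrow> real poly \<Rightarrow> real" where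
  "He_umbral X Y n p = (\<Sum>i\<le>n. coeff p i * He i X * He (n - i) Y)"

(* d/dt of that homogeneous polynomial, by Euler's identity s d/ds + t d/dt = n. *)
definition pderiv_hom :: "nat \<Rightarrow> 'a::idom poly \<Rightarrow> 'a poly" where
  "pderiv_hom n p = smult (of_nat n) p - pCons 0 (pderiv p)"

lemma He_umbral_add: "He_umbral X Y n (p + q) = He_umbral X Y n p + He_umbral X Y n q"
  by (simp add: He_umbral_def algebra_simps sum.distrib)

lemma He_umbral_smult: "He_umbral X Y n (smult c p) = c * He_umbral X Y n p"
  by (simp add: He_umbral_def algebra_simps sum_distrib_left)

lemma He_umbral_mult_X:
  assumes "degree p \<le> n"
  shows "X * He_umbral X Y n p = He_umbral X Y (Suc n) (pCons 0 p) + He_umbral X Y (n - 1) (pderiv p)"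
proof -
  have "X * He_umbral X Y n p = (\<Sum>i\<le>n. coeff p i * He (Suc i) X * He (n - i) Y)
      + (\<Sum>i\<le>n. coeff p i * real i * He (i - 1) X * He (n - i) Y)"
    by (simp add: He_umbral_def sum_distrib_left sum.distrib[symmetric] algebra_simps)
  moreover have "(\<Sum>i\<le>n. coeff p i * He (Suc i) X * He (n - i) Y) = He_umbral X Y (Suc n) (pCons 0 p)"
    unfolding He_umbral_def by (subst sum.atMost_Suc_shift) simp
  moreover have "(\<Sum>i\<le>n. coeff p i * real i * He (i - 1) X * He (n - i) Y)
                 = He_umbral X Y (n - 1) (pderiv p)"
  proof (cases n)
    case 0
    with assms have "pderiv p = 0"
      by (simp add: pderiv_eq_0_iff)
    with 0 show ?thesis
      by (simp add: He_umbral_def)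
  next
    case (Suc m)
    show ?thesis
      unfolding He_umbral_def Suc by (subst sum.atMost_Suc_shift) (simp add: coeff_pderiv algebra_simps)
  qed
  ultimately show ?thesis
    by simp
qed

lemma He_umbral_mult_Y:
  assumes "degree p \<le> n"
  shows "Y * He_umbral X Y n p = He_umbral X Y (Suc n) p + He_umbral X Y (n - 1) (pderiv_hom n p)"
proof -
  have "Y * He_umbral X Y n p = (\<Sum>i\<le>n. coeff p i * He i X * He (Suc n - i) Y)
      + (\<Sum>i\<le>n. coeff p i * real (n - i) * He i X * He (n - i - 1) Y)"
    unfolding He_umbral_def sum_distrib_left sum.distrib[symmetric]
    by (intro sum.cong refl) (auto simp: Suc_diff_le algebra_simps)
  moreover have "(\<Sum>i\<le>n. coeff p i * He i X * He (Suc n - i) Y) = He_umbral X Y (Suc n) p"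
    using assms by (simp add: He_umbral_def coeff_eq_0)
  moreover have "(\<Sum>i\<le>n. coeff p i * real (n - i) * He i X * He (n - i - 1) Y)
                 = He_umbral X Y (n - 1) (pderiv_hom n p)"
  proof (cases "n = 0")
    case True
    then show ?thesis
      by (simp add: He_umbral_def pderiv_hom_def)
  next
    case False
    have coeff_hom: "coeff (pderiv_hom n p) i = real (n - i) * coeff p i" if "i \<le> n" for i
      using that by (cases i) (simp_all add: pderiv_hom_def coeff_pderiv algebra_simps)
    from False have "{..n} = insert n {..n - 1}"
      by auto
    then have "(\<Sum>i\<le>n. coeff p i * real (n - i) * He i X * He (n - i - 1) Y)
          = (\<Sum>i\<le>n - 1. coeff p i * real (n - i) * He i X * He (n - i - 1) Y)"
      using False by simp
    also have "\<dots> = He_umbral X Y (n - 1) (pderiv_hom n p)"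
      unfolding He_umbral_def by (intro sum.cong refl) (simp add: coeff_hom diff_commute)
    finally show ?thesis .
  qed
  ultimately show ?thesis
    by simp
qed

lemma He_umbral_mult_linear:
  assumes "degree p \<le> n"
  shows "(\<alpha> * X + \<beta> * Y) * He_umbral X Y n p
         = He_umbral X Y (Suc n) ([:\<beta>, \<alpha>:] * p)
           + He_umbral X Y (n - 1) (smult \<alpha> (pderiv p) + smult \<beta> (pderiv_hom n p))"
proof -
  have "(\<alpha> * X + \<beta> * Y) * He_umbral X Y n p
        = \<alpha> * (X * He_umbral X Y n p) + \<beta> * (Y * He_umbral X Y n p)"
    by (simp add: algebra_simps)
  also have "\<dots> = \<alpha> * (He_umbral X Y (Suc n) (pCons 0 p) + He_umbral X Y (n - 1) (pderiv p))
                 + \<beta> * (He_umbral X Y (Suc n) p + He_umbral X Y (n - 1) (pderiv_hom n p))"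
    by (simp only: He_umbral_mult_X[OF assms] He_umbral_mult_Y[OF assms])
  also have "\<dots> = He_umbral X Y (Suc n) (smult \<alpha> (pCons 0 p) + smult \<beta> p)
                 + He_umbral X Y (n - 1) (smult \<alpha> (pderiv p) + smult \<beta> (pderiv_hom n p))"
    by (simp only: He_umbral_add He_umbral_smult algebra_simps)
  also have "smult \<alpha> (pCons 0 p) + smult \<beta> p = [:\<beta>, \<alpha>:] * p"
    by simp
  finally show ?thesis .
qed

lemma pderiv_hom_mult: "pderiv_hom (m + n) (p * q) = pderiv_hom m p * q + p * pderiv_hom n q"
  by (simp add: pderiv_hom_def pderiv_mult smult_add_left algebra_simps)

lemma pderiv_hom_power:
  "pderiv_hom (m * n) (p ^ n) = smult (of_nat n) (p ^ (n - 1) * pderiv_hom m p)"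
proof (induction n)
  case 0
  then show ?case
    by (simp add: pderiv_hom_def)
next
  case (Suc n)
  have "p * smult (of_nat n) (p ^ (n - 1) * pderiv_hom m p) = smult (of_nat n) (p ^ n * pderiv_hom m p)"
    by (cases n) (simp_all add: mult_ac)
  then show ?case
    using Suc pderiv_hom_mult[of m "m * n" p "p ^ n"]
    by (simp add: smult_add_left mult_ac)
qed

lemma pderiv_hom_linear_power: "pderiv_hom n ([:c, d:] ^ n) = smult (of_nat n) ([:c, d:] ^ (n - 1) * [:c:])"
proof -
  have "pderiv_hom 1 [:c, d:] = [:c:]"
    by (simp add: pderiv_hom_def pderiv_pCons)
  then show ?thesis
    using pderiv_hom_power[of 1 n "[:c, d:]"] by simp
qed

(* (a s + b t)^l (b s - a t)^k at t = 1. *)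
definition rotation_poly :: "'a::comm_ring_1 \<Rightarrow> 'a \<Rightarrow> nat \<Rightarrow> nat \<Rightarrow> 'a poly" where
  "rotation_poly a b l k = [:b, a:] ^ l * [:-a, b:] ^ k"

lemma rotation_poly_Suc_left: "[:b, a:] * rotation_poly a b l k = rotation_poly a b (Suc l) k"
  by (simp add: rotation_poly_def mult.assoc del: mult_pCons_left)

lemma rotation_poly_Suc_right: "[:-a, b:] * rotation_poly a b l k = rotation_poly a b l (Suc k)"
  by (simp add: rotation_poly_def mult_ac del: mult_pCons_left)

lemma degree_linear_power: "degree ([:c, d:] ^ n) \<le> n"
  using degree_power_le[of "[:c, d:]" n] by (cases "d = 0") auto

lemma degree_rotation_poly: "degree (rotation_poly a b l k) \<le> l + k"
  unfolding rotation_poly_def by (meson add_mono degree_linear_power degree_mult_le order_trans)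

lemma pderiv_rotation_poly:
  "pderiv (rotation_poly a b l k)
   = smult (of_nat l * a) (rotation_poly a b (l - 1) k) + smult (of_nat k * b) (rotation_poly a b l (k - 1))"
  by (simp add: rotation_poly_def pderiv_mult pderiv_power pderiv_pCons algebra_simps)

lemma pderiv_hom_rotation_poly:
  "pderiv_hom (l + k) (rotation_poly a b l k)
   = smult (of_nat l * b) (rotation_poly a b (l - 1) k) - smult (of_nat k * a) (rotation_poly a b l (k - 1))"
  using pderiv_hom_mult[of l k "[:b, a:] ^ l" "[:-a, b:] ^ k"]
  by (simp add: rotation_poly_def pderiv_hom_linear_power algebra_simps)

lemma rotation_poly_lower_left:
  assumes "a\<^sup>2 + b\<^sup>2 = 1"
  shows "smult a (pderiv (rotation_poly a b l k)) + smult b (pderiv_hom (l + k) (rotation_poly a b l k))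
         = smult (of_nat l) (rotation_poly a b (l - 1) k)"
proof -
  have "of_nat l * a * a + of_nat l * b * b = (of_nat l :: 'a)"
    using assms by (metis distrib_left mult.assoc mult_1_right power2_eq_square)
  then have "smult (of_nat l * a * a) q + smult (of_nat l * b * b) q = smult (of_nat l) q" for q
    by (metis smult_add_left)
  then show ?thesis
    by (simp add: pderiv_rotation_poly pderiv_hom_rotation_poly smult_add_right smult_diff_right mult_ac)
qed

lemma rotation_poly_lower_right:
  assumes "a\<^sup>2 + b\<^sup>2 = 1"
  shows "smult b (pderiv (rotation_poly a b l k)) + smult (- a) (pderiv_hom (l + k) (rotation_poly a b l k))
         = smult (of_nat k) (rotation_poly a b l (k - 1))"
proof -
  have "of_nat k * b * b + of_nat k * a * a = (of_nat k :: 'a)"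
    using assms by (metis add.commute distrib_left mult.assoc mult_1_right power2_eq_square)
  then have "smult (of_nat k * b * b) q + smult (of_nat k * a * a) q = smult (of_nat k) q" for q
    by (metis smult_add_left)
  then show ?thesis
    by (simp add: pderiv_rotation_poly pderiv_hom_rotation_poly smult_add_right smult_diff_right mult_ac)
qed

lemma He_rotation_left:
  fixes a b X Y :: real
  assumes "a\<^sup>2 + b\<^sup>2 = 1"
  shows "He l (a * X + b * Y) = He_umbral X Y l (rotation_poly a b l 0)"
proof (induction l rule: less_induct)
  case (less l)
  show ?case
  proof (cases l)
    case 0
    then show ?thesis
      by (simp add: He_umbral_def rotation_poly_def)
  next
    case (Suc j)
    have "(a * X + b * Y) * He_umbral X Y j (rotation_poly a b j 0)
          = He_umbral X Y l (rotation_poly a b l 0)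
            + real j * He_umbral X Y (j - 1) (rotation_poly a b (j - 1) 0)"
      using He_umbral_mult_linear[OF degree_rotation_poly[of a b j 0, simplified], of a X b Y]
            rotation_poly_lower_left[OF assms, of j 0] Suc
      by (simp add: He_umbral_smult rotation_poly_Suc_left del: mult_pCons_left)
    then show ?thesis
      using less Suc by simp
  qed
qed

lemma He_rotation:
  fixes a b X Y :: real
  assumes "a\<^sup>2 + b\<^sup>2 = 1"
  shows "He l (a * X + b * Y) * He k (b * X - a * Y) = He_umbral X Y (l + k) (rotation_poly a b l k)"
proof (induction k rule: less_induct)
  case (less k)
  define u where "u = a * X + b * Y"
  define w where "w = b * X + (- a) * Y"
  have IH: "He l u * He j w = He_umbral X Y (l + j) (rotation_poly a b l j)" if "j < k" for j
    using less[OF that] by (simp add: u_def w_def)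
  show ?case
  proof (cases k)
    case 0
    then show ?thesis
      by (simp add: He_rotation_left[OF assms])
  next
    case (Suc j)
    have step: "w * He_umbral X Y (l + j) (rotation_poly a b l j)
          = He_umbral X Y (l + k) (rotation_poly a b l k)
            + real j * He_umbral X Y (l + j - 1) (rotation_poly a b l (j - 1))"
      using He_umbral_mult_linear[OF degree_rotation_poly[of a b l j], of b X "- a" Y]
            rotation_poly_lower_right[OF assms, of l j] Suc
      by (simp add: w_def He_umbral_smult rotation_poly_Suc_right del: mult_pCons_left)
    have lower: "real j * (He l u * He (j - 1) w)
                 = real j * He_umbral X Y (l + j - 1) (rotation_poly a b l (j - 1))"
      using IH[of "j - 1"] Suc by (cases j) simp_all
    have IH_j: "He l u * He j w = He_umbral X Y (l + j) (rotation_poly a b l j)"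
      using IH Suc by simp
    have "He l u * He k w = w * (He l u * He j w) - real j * (He l u * He (j - 1) w)"
      using Suc by (simp add: algebra_simps)
    also have "\<dots> = He_umbral X Y (l + k) (rotation_poly a b l k)"
      unfolding IH_j lower step by simp
    finally show ?thesis
      by (simp add: u_def w_def)
  qed
qed

lemma coeff_rotation_poly:
  "coeff (rotation_poly a b l k) n
   = (\<Sum>i | i \<le> l \<and> i \<le> n \<and> n - i \<le> k.
        of_nat (l choose i) * of_nat (k choose (n - i))
        * (a ^ i * b ^ (l - i)) * (b ^ (n - i) * (- a) ^ (k - (n - i))))"
proof -
  have coeff_linear_power:
    "coeff ([:c, d:] ^ m) i = (if i \<le> m then of_nat (m choose i) * d ^ i * c ^ (m - i) else 0)"
    for c d :: 'a and m i
    using coeff_linear_poly_power[of i m c d] degree_linear_power[of c d m] by (auto intro: coeff_eq_0)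
  have "coeff (rotation_poly a b l k) n
        = (\<Sum>i\<in>{..n}. if i \<le> l \<and> n - i \<le> k then
             of_nat (l choose i) * of_nat (k choose (n - i))
             * (a ^ i * b ^ (l - i)) * (b ^ (n - i) * (- a) ^ (k - (n - i)))
           else 0)"
    unfolding rotation_poly_def coeff_mult coeff_linear_power by (intro sum.cong) auto
  also have "\<dots> = (\<Sum>i | i \<le> l \<and> i \<le> n \<and> n - i \<le> k.
        of_nat (l choose i) * of_nat (k choose (n - i))
        * (a ^ i * b ^ (l - i)) * (b ^ (n - i) * (- a) ^ (k - (n - i))))"
    by (simp add: sum.inter_filter[symmetric]) (intro sum.cong; auto)
  finally show ?thesis .
qed

lemma rotation_weights_power:
  fixes r :: real
  assumes "r > 0"
  shows "(1 / sqrt (1 + r)) ^ p * sqrt (r / (1 + r)) ^ q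
         = (1 + r) powr (- (real p + real q) / 2) * r powr (real q / 2)"
proof -
  have a: "1 / sqrt (1 + r) = (1 + r) powr (- (1 / 2))"
    using assms by (simp add: powr_minus_divide powr_half_sqrt)
  have b: "sqrt (r / (1 + r)) = r powr (1 / 2) * (1 + r) powr (- (1 / 2))"
    using assms by (simp add: powr_minus_divide powr_half_sqrt real_sqrt_divide)
  show ?thesis
    using assms
    by (simp add: a b power_mult_distrib powr_power powr_add[symmetric] mult_ac diff_divide_distrib)
qed

lemma coeff_rotation_poly_eq_coef_c:
  fixes r :: real
  assumes "r > 0" and "n \<le> l + k"
  shows "coeff (rotation_poly (1 / sqrt (1 + r)) (sqrt (r / (1 + r))) l k) n = coef_c l k n (l + k - n) r"
proof -
  define a where "a = 1 / sqrt (1 + r)"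
  define b where "b = sqrt (r / (1 + r))"
  define S where "S = {i. i \<le> l \<and> i \<le> n \<and> n - i \<le> k}"
  define F where "F s = binom_int l s * binom_int k (int n - s) * (-1) powi (int k - int n + s)
                        * r powr ((real l + real n) / 2 - real_of_int s)" for s
  have "{0..int l} = int ` {..l}"
    by (simp add: image_int_atLeastAtMost atLeast0AtMost[symmetric])
  then have "(\<Sum>s\<in>{0..int l}. F s) = (\<Sum>i\<le>l. F (int i))"
    by (simp add: sum.reindex)
  also have "\<dots> = (\<Sum>i\<in>S. F (int i))"
    by (rule sum.mono_neutral_right) (auto simp: S_def F_def binom_int_def)
  finally have coef_c_eq:
    "coef_c l k n (l + k - n) r = (1 + r) powr (- (real l + real k) / 2) * (\<Sum>i\<in>S. F (int i))"
    using assms(2) by (simp add: coef_c_def F_def)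
  have "a ^ i * b ^ (l - i) * (b ^ (n - i) * (- a) ^ (k - (n - i)))
        = (1 + r) powr (- (real l + real k) / 2)
          * ((- 1) ^ (k - (n - i)) * r powr ((real l + real n) / 2 - real i))"
    if "i \<in> S" for i
  proof -
    have "a ^ i * b ^ (l - i) * (b ^ (n - i) * (- a) ^ (k - (n - i)))
          = (- 1) ^ (k - (n - i)) * (a ^ (i + (k - (n - i))) * b ^ (l - i + (n - i)))"
      by (simp add: power_add power_minus[of a] mult_ac)
    also have "\<dots> = (- 1) ^ (k - (n - i))
                      * ((1 + r) powr (- (real l + real k) / 2) * r powr ((real l + real n) / 2 - real i))"
      using that unfolding a_def b_def rotation_weights_power[OF assms(1)]
      by (simp add: S_def le_diff_conv field_simps)
    finally show ?thesis
      by (simp only: mult_ac)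
  qed
  moreover have "F (int i) = real (l choose i) * real (k choose (n - i))
                             * ((- 1) ^ (k - (n - i)) * r powr ((real l + real n) / 2 - real i))"
    if "i \<in> S" for i
  proof -
    have int_diffs: "int n - int i = int (n - i)" "int k - int n + int i = int (k - (n - i))"
      using that by (auto simp: S_def)
    show ?thesis
      unfolding F_def int_diffs using that by (simp add: S_def binom_int_def del: of_nat_diff)
  qed
  ultimately show ?thesis
    unfolding coef_c_eq coeff_rotation_poly S_def[symmetric] a_def[symmetric] b_def[symmetric]
      sum_distrib_left
    by (intro sum.cong refl) (simp add: mult_ac)
qed

lemma He_mult_rotated:
  fixes r T x y :: real
  assumes "r > 0" and "T > 0"
  shows "He l ((x + r / (1 + r) * y) / sqrt T) * He k ((sqrt r * x - sqrt r / (1 + r) * y) / sqrt T)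
         = (\<Sum>n\<le>l + k. coef_c l k n (l + k - n) r
              * He n (sqrt (1 + r) * x / sqrt T) * He (l + k - n) (sqrt (r / (1 + r)) * y / sqrt T))"
proof -
  define a where "a = 1 / sqrt (1 + r)"
  define b where "b = sqrt (r / (1 + r))"
  define X where "X = sqrt (1 + r) * x / sqrt T"
  define Y where "Y = sqrt (r / (1 + r)) * y / sqrt T"
  have sqrt_sq: "sqrt (1 + r) * sqrt (1 + r) = 1 + r" "sqrt r * sqrt r = r"
    using assms by simp_all
  have pos: "sqrt (1 + r) > 0" "sqrt T > 0" "1 + r > 0"
    using assms by simp_all
  have unit: "a\<^sup>2 + b\<^sup>2 = 1"
    using pos sqrt_sq by (simp add: a_def b_def power2_eq_square real_sqrt_divide field_simps)
  have "a * X = x / sqrt T" and "b * X = sqrt r * x / sqrt T"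
    using pos by (simp_all add: a_def b_def X_def real_sqrt_divide)
  moreover have "b * Y = r / (1 + r) * y / sqrt T" and "a * Y = sqrt r / (1 + r) * y / sqrt T"
    using pos sqrt_sq by (simp_all add: a_def b_def Y_def real_sqrt_divide field_simps)
  ultimately have args: "(x + r / (1 + r) * y) / sqrt T = a * X + b * Y"
    "(sqrt r * x - sqrt r / (1 + r) * y) / sqrt T = b * X - a * Y"
    by (simp_all add: add_divide_distrib diff_divide_distrib)
  have "He l ((x + r / (1 + r) * y) / sqrt T) * He k ((sqrt r * x - sqrt r / (1 + r) * y) / sqrt T)
        = He_umbral X Y (l + k) (rotation_poly a b l k)"
    unfolding args by (rule He_rotation[OF unit])
  also have "\<dots> = (\<Sum>n\<le>l + k. coef_c l k n (l + k - n) r * He n X * He (l + k - n) Y)"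
    unfolding He_umbral_def a_def b_def
    by (intro sum.cong refl) (simp add: coeff_rotation_poly_eq_coef_c[OF assms(1)])
  finally show ?thesis
    by (simp only: X_def Y_def)
qed

lemma sum_pairs_with_fixed_sum:
  fixes n :: "'i::finite \<Rightarrow> nat"
  shows "(\<Sum>(p, q) \<in> {(p, q). \<forall>i. p i + q i = n i}. f p q)
         = (\<Sum>q \<in> PiE UNIV (\<lambda>i. {..n i}). f (\<lambda>i. n i - q i) q)"
proof -
  have "(\<forall>i. p i + q i = n i) \<longleftrightarrow> q \<in> PiE UNIV (\<lambda>i. {..n i}) \<and> p = (\<lambda>i. n i - q i)" for p q
  proof
    assume sum: "\<forall>i. p i + q i = n i"
    then have "q i \<le> n i" and "p i = n i - q i" for i
      by (metis le_add2, metis add_diff_cancel_right')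
    then show "q \<in> PiE UNIV (\<lambda>i. {..n i}) \<and> p = (\<lambda>i. n i - q i)"
      by (auto simp: PiE_UNIV_domain)
  qed (auto simp: PiE_UNIV_domain Pi_iff)
  then show ?thesis
    by (intro sum.reindex_bij_witness[where j = snd and i = "\<lambda>q. (\<lambda>i. n i - q i, q)"]) auto
qed

theorem lemma1:
  fixes r Tb :: real and h g :: "real^3" and lam kap :: "3 \<Rightarrow> nat"
  assumes "r > 0" and "Tb > 0"
  shows "hermite 0 Tb lam (h + (r / (1 + r)) *\<^sub>R g)
           * hermite 0 Tb kap (sqrt r *\<^sub>R h - (sqrt r / (1 + r)) *\<^sub>R g)
         = (\<Sum>(kap', lam') \<in> {(a, b). \<forall>i. a i + b i = kap i + lam i}.
              (\<Prod>d\<in>UNIV. coef_c (lam d) (kap d) (lam' d) (kap' d) r)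
              * hermite 0 Tb lam' (sqrt (1 + r) *\<^sub>R h)
              * hermite 0 Tb kap' (sqrt (r / (1 + r)) *\<^sub>R g))"
proof -
  define n where "n d = kap d + lam d" for d
  define f where "f d m = coef_c (lam d) (kap d) m (n d - m) r
    * He m (sqrt (1 + r) * h$d / sqrt Tb) * He (n d - m) (sqrt (r / (1 + r)) * g$d / sqrt Tb)" for d m
  have "hermite 0 Tb lam (h + (r / (1 + r)) *\<^sub>R g)
          * hermite 0 Tb kap (sqrt r *\<^sub>R h - (sqrt r / (1 + r)) *\<^sub>R g)
        = (\<Prod>d\<in>UNIV. \<Sum>m\<le>n d. f d m)"
    unfolding hermite_0_eq_prod_He[OF assms(2)] prod.distrib[symmetric]
  proof (intro prod.cong refl)
    fix d :: 3
    show "He (lam d) ((h + (r / (1 + r)) *\<^sub>R g) $ d / sqrt Tb)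
          * He (kap d) ((sqrt r *\<^sub>R h - (sqrt r / (1 + r)) *\<^sub>R g) $ d / sqrt Tb)
          = (\<Sum>m\<le>n d. f d m)"
      using He_mult_rotated[OF assms, of "lam d" "h$d" "g$d" "kap d"]
      by (simp add: f_def n_def add.commute)
  qed
  also have "\<dots> = (\<Sum>q\<in>PiE UNIV (\<lambda>d. {..n d}). \<Prod>d\<in>UNIV. f d (q d))"
    by (rule prod_sum_PiE) auto
  also have "\<dots> = (\<Sum>(kap', lam') \<in> {(p, q). \<forall>i. p i + q i = n i}.
              (\<Prod>d\<in>UNIV. coef_c (lam d) (kap d) (lam' d) (kap' d) r)
              * hermite 0 Tb lam' (sqrt (1 + r) *\<^sub>R h)
              * hermite 0 Tb kap' (sqrt (r / (1 + r)) *\<^sub>R g))"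
    unfolding sum_pairs_with_fixed_sum
    by (intro sum.cong refl) (simp add: hermite_0_eq_prod_He[OF assms(2)] prod.distrib f_def)
  finally show ?thesis
    by (simp add: n_def)
qed

end
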